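(* For every integer $d>2$ there is a directed tree in which every vertex has degree at most $d$ and every directed path has length at most one, and whose span is at least $\lfloor d/2\rfloor+1$.
   Context: A directed tree is a DAG (directed acyclic graph) whose underlying undirected graph is a tree. An upward-planar layered drawing of a DAG $G$ maps each vertex $v$ to a point in the plane whose y-coordinate $y(v)$ is an integer, and each edge $(u,v)$ (directed from tail $u$ to head $v$) to a strictly y-monotone curve going upward from $u$ to $v$ (so $y(u)<y(v)$), such that no two edges intersect except at common endpoints. The span of an edge $(u,v)$ in such a drawing $\Gamma$ is $y(v)-y(u)$; the span of $\Gamma$ is the maximum span of its edges; the span of an upward-planar DAG is the minimum span over all its upward-planar layered drawings. The degree of a vertex is its total number of incident edges. The length of a directed path is its number of edges. *)

theory Defs
  imports "HOL-Analysis.Analysis"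
begin

definition directed_tree :: "'a set \<Rightarrow> ('a \<times> 'a) set \<Rightarrow> bool" where
  "directed_tree V E \<longleftrightarrow>
     finite V \<and> V \<noteq> {} \<and> E \<subseteq> V \<times> V \<and>
     acyclic E \<and>
     (\<forall>u v. (u, v) \<in> E \<longrightarrow> (v, u) \<notin> E) \<and>
     (\<forall>u\<in>V. \<forall>v\<in>V. (u, v) \<in> (E \<union> E\<inverse>)\<^sup>*) \<and>
     card V = card {{u, v} | u v. (u, v) \<in> E} + 1"

definition vdegree :: "('a \<times> 'a) set \<Rightarrow> 'a \<Rightarrow> nat" where
  "vdegree E v = card {e \<in> E. fst e = v \<or> snd e = v}"

definition paths_at_most_one :: "('a \<times> 'a) set \<Rightarrow> bool" where
  "paths_at_most_one E \<longleftrightarrow> (\<forall>u v w. (u, v) \<in> E \<longrightarrow> (v, w) \<notin> E)"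

definition upward_layered_drawing ::
  "'a set \<Rightarrow> ('a \<times> 'a) set \<Rightarrow> ('a \<Rightarrow> real) \<Rightarrow> ('a \<Rightarrow> int) \<Rightarrow> ('a \<times> 'a \<Rightarrow> real \<Rightarrow> real \<times> real) \<Rightarrow> bool" where
  "upward_layered_drawing V E x y c \<longleftrightarrow>
     inj_on (\<lambda>v. (x v, real_of_int (y v))) V \<and>
     (\<forall>(u, v) \<in> E.
        continuous_on {0..1} (c (u, v)) \<and>
        c (u, v) 0 = (x u, real_of_int (y u)) \<and>
        c (u, v) 1 = (x v, real_of_int (y v)) \<and>
        strict_mono_on {0..1} (\<lambda>t. snd (c (u, v) t))) \<and>
     (\<forall>e1\<in>E. \<forall>e2\<in>E. e1 \<noteq> e2 \<longrightarrow>
        c e1 ` {0..1} \<inter> c e2 ` {0..1} \<subseteq>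
          (\<lambda>v. (x v, real_of_int (y v))) ` ({fst e1, snd e1} \<inter> {fst e2, snd e2})) \<and>
     (\<forall>e\<in>E. \<forall>w\<in>V. (x w, real_of_int (y w)) \<in> c e ` {0..1} \<longrightarrow> w = fst e \<or> w = snd e)"

definition upward_planar :: "'a set \<Rightarrow> ('a \<times> 'a) set \<Rightarrow> bool" where
  "upward_planar V E \<longleftrightarrow> (\<exists>x y c. upward_layered_drawing V E x y c)"

definition dag_span :: "'a set \<Rightarrow> ('a \<times> 'a) set \<Rightarrow> nat" where
  "dag_span V E = (LEAST s::nat. \<exists>x y c. upward_layered_drawing V E x y c \<and>
       (\<forall>(u, v) \<in> E. y v - y u \<le> int s))"

end

(*
  The tree is a complete tree of height d div 2 + 5 in which every inner vertex has degree d and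
  the edges alternate in direction. Its vertices are numbered so that every edge points to a
  larger vertex and no two edges interleave; placing the vertices on a vertical line and drawing
  every edge as an arc to the right of that line gives an upward-planar drawing.

  For the lower bound, suppose that some drawing has span k = d div 2, and view each edge as the
  graph of its x-coordinate as a function of the height. The out-edges of a source s leave s in a
  left-to-right order and end on the k levels above s. If some out-neighbour c has out-neighbours
  of s at least as high as c on both sides, then c is enclosed by their edges, so all other
  in-neighbours of c lie above s; in the upside-down drawing this is the same situation at c with
  a smaller height difference, and such a descent cannot go on forever. Otherwise every
  out-neighbour is higher than all out-neighbours to its left or than all to its right, so there
  are at most 2 k of them. This contradicts degree d when d is odd. When d is even, the heights of
  these records fill each level exactly once from either side, and following this rigid
  structure along two more edges again produces an enclosed vertex.
*)

theory Submission
  imports Defs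
begin

section \<open>Left and right records\<close>

definition left_records :: "('b \<Rightarrow> 'b \<Rightarrow> bool) \<Rightarrow> ('b \<Rightarrow> int) \<Rightarrow> 'b set \<Rightarrow> 'b set" where
  "left_records r h A = {a\<in>A. \<forall>b\<in>A. r b a \<longrightarrow> h b < h a}"

definition right_records :: "('b \<Rightarrow> 'b \<Rightarrow> bool) \<Rightarrow> ('b \<Rightarrow> int) \<Rightarrow> 'b set \<Rightarrow> 'b set" where
  "right_records r h A = {a\<in>A. \<forall>b\<in>A. r a b \<longrightarrow> h b < h a}"

definition trapped :: "('b \<Rightarrow> 'b \<Rightarrow> bool) \<Rightarrow> ('b \<Rightarrow> int) \<Rightarrow> 'b set \<Rightarrow> 'b \<Rightarrow> bool" where
  "trapped r h A a \<longleftrightarrow> (\<exists>b1\<in>A. \<exists>b2\<in>A. r b1 a \<and> r a b2 \<and> h a \<le> h b1 \<and> h a \<le> h b2)"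

lemma untrapped_subset_records:
  assumes "\<forall>a\<in>A. \<not> trapped r h A a"
  shows "A \<subseteq> left_records r h A \<union> right_records r h A"
  using assms unfolding trapped_def left_records_def right_records_def by (auto simp: not_le)

lemma inj_on_records:
  assumes "totalp_on A r"
  shows "inj_on h (left_records r h A)" "inj_on h (right_records r h A)"
  using assms unfolding totalp_on_def inj_on_def left_records_def right_records_def
  by (metis (no_types, lifting) mem_Collect_eq order_less_irrefl)+

lemma card_records_le:
  assumes tot: "totalp_on A r" and S: "h ` A \<subseteq> S" "finite S"
  shows "card (left_records r h A) \<le> card S" "card (right_records r h A) \<le> card S"
proof -
  have "left_records r h A \<subseteq> A" "right_records r h A \<subseteq> A"
    by (auto simp: left_records_def right_records_def)
  then show "card (left_records r h A) \<le> card S" "card (right_records r h A) \<le> card S"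
    using S by (auto intro!: card_inj_on_le[OF inj_on_records(1)[OF tot]]
                  card_inj_on_le[OF inj_on_records(2)[OF tot]])
qed

lemma card_untrapped_le:
  assumes fin: "finite A" and tot: "totalp_on A r"
    and nt: "\<forall>a\<in>A. \<not> trapped r h A a" and S: "h ` A \<subseteq> {lo + 1..lo + int k}"
  shows "card A \<le> 2 * k"
proof -
  have "card A \<le> card (left_records r h A \<union> right_records r h A)"
    using untrapped_subset_records[OF nt] fin
    by (intro card_mono) (auto simp: left_records_def right_records_def)
  also have "\<dots> \<le> card (left_records r h A) + card (right_records r h A)" by (rule card_Un_le)
  also have "\<dots> \<le> k + k" using card_records_le[OF tot S] by simp
  finally show ?thesis by simp
qed

lemma card_untrapped_unique_top_le:
  assumes fin: "finite A" and tot: "totalp_on A r"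
    and irr: "irreflp_on A r"
    and nt: "\<forall>a\<in>A. \<not> trapped r h A a" and S: "h ` A \<subseteq> {lo + 1..lo + int n}"
    and top: "\<forall>a\<in>A. \<forall>b\<in>A. h a = lo + int n \<longrightarrow> h b = lo + int n \<longrightarrow> a = b"
    and n: "n \<ge> 1"
  shows "card A \<le> 2 * n - 1"
proof (cases "\<exists>a\<in>A. h a = lo + int n")
  case True
  then obtain a where a: "a \<in> A" "h a = lo + int n" by blast
  let ?L = "left_records r h A" and ?R = "right_records r h A"
  have "h b < h a" if "b \<in> A" "b \<noteq> a" for b
    using S top a that by fastforce
  then have "a \<in> ?L \<inter> ?R"
    using a irreflp_onD[OF irr] unfolding left_records_def right_records_def by auto
  moreover have f: "finite ?L" "finite ?R" using fin
    by (auto simp: left_records_def right_records_def)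
  ultimately have "1 \<le> card (?L \<inter> ?R)"
    by (metis One_nat_def Suc_leI card_gt_0_iff empty_iff finite_Int)
  moreover have "card A \<le> card (?L \<union> ?R)"
    using untrapped_subset_records[OF nt] f by (intro card_mono) auto
  moreover have "card (?L \<union> ?R) + card (?L \<inter> ?R) = card ?L + card ?R"
    using card_Un_Int[OF f] by simp
  moreover have "card ?L \<le> n" "card ?R \<le> n" using card_records_le[OF tot S] by auto
  ultimately show ?thesis by linarith
next
  case False
  then have "h ` A \<subseteq> {lo + 1..lo + int (n - 1)}" using S n by force
  from card_untrapped_le[OF fin tot nt this] n show ?thesis by simp
qed

lemma untrapped_records_tight:
  assumes fin: "finite A" and tot: "totalp_on A r"
    and nt: "\<forall>a\<in>A. \<not> trapped r h A a" and S: "h ` A \<subseteq> {lo + 1..lo + int k}"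
    and c: "card A \<ge> 2 * k"
  shows "h ` left_records r h A = {lo + 1..lo + int k}"
    "h ` right_records r h A = {lo + 1..lo + int k}"
    "left_records r h A \<inter> right_records r h A = {}"
proof -
  let ?L = "left_records r h A" and ?R = "right_records r h A"
  have f: "finite ?L" "finite ?R" using fin by (auto simp: left_records_def right_records_def)
  have "card A \<le> card (?L \<union> ?R)"
    using untrapped_subset_records[OF nt] f by (intro card_mono) auto
  moreover have "card (?L \<union> ?R) + card (?L \<inter> ?R) = card ?L + card ?R"
    using card_Un_Int[OF f] by simp
  moreover have cs: "card {lo + 1..lo + int k} = k" by simp
  moreover have "card ?L \<le> k" "card ?R \<le> k" using card_records_le[OF tot S] cs by auto
  ultimately have cL: "card ?L = k" and cR: "card ?R = k" and cI: "card (?L \<inter> ?R) = 0"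
    using c by linarith+
  show "?L \<inter> ?R = {}" using cI f by simp
  show "h ` ?L = {lo + 1..lo + int k}"
    using S cL cs card_image[OF inj_on_records(1)[OF tot]]
    by (intro card_subset_eq) (auto simp: left_records_def)
  show "h ` ?R = {lo + 1..lo + int k}"
    using S cR cs card_image[OF inj_on_records(2)[OF tot]]
    by (intro card_subset_eq) (auto simp: right_records_def)
qed

section \<open>Edges as graphs over the height axis\<close>

text \<open>\<open>X e t\<close> is the x-coordinate of the edge \<open>e\<close> at height \<open>t\<close>.\<close>

definition graph_drawing ::
  "('a \<times> 'a) set \<Rightarrow> ('a \<Rightarrow> real) \<Rightarrow> ('a \<Rightarrow> int) \<Rightarrow> ('a \<times> 'a \<Rightarrow> real \<Rightarrow> real) \<Rightarrow> bool" where
  "graph_drawing E x y X \<longleftrightarrow>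
     (\<forall>p q. (p, q) \<in> E \<longrightarrow> y p < y q \<and>
        continuous_on {real_of_int (y p)..real_of_int (y q)} (X (p, q)) \<and>
        X (p, q) (y p) = x p \<and> X (p, q) (y q) = x q) \<and>
     (\<forall>p q p' q' t. (p, q) \<in> E \<longrightarrow> (p', q') \<in> E \<longrightarrow> (p, q) \<noteq> (p', q') \<longrightarrow>
        real_of_int (y p) \<le> t \<longrightarrow> t \<le> y q \<longrightarrow> y p' \<le> t \<longrightarrow> t \<le> y q' \<longrightarrow>
        X (p, q) t = X (p', q') t \<longrightarrow>
        (\<exists>v. (v = p \<or> v = q) \<and> (v = p' \<or> v = q') \<and> real_of_int (y v) = t))"

lemma strict_mono_curve_is_graph:
  fixes c :: "real \<Rightarrow> real \<times> real"
  assumes cont: "continuous_on {0..1} c" and mono: "strict_mono_on {0..1} (\<lambda>s. snd (c s))"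
  shows "\<exists>f. snd (c 0) < snd (c 1) \<and> continuous_on {snd (c 0)..snd (c 1)} f \<and>
    f (snd (c 0)) = fst (c 0) \<and> f (snd (c 1)) = fst (c 1) \<and>
    (\<forall>t\<in>{snd (c 0)..snd (c 1)}. (f t, t) \<in> c ` {0..1})"
proof -
  let ?g = "\<lambda>s. snd (c s)" and ?I = "{snd (c 0)..snd (c 1)}"
  define \<sigma> where "\<sigma> = inv_into {0..1} ?g"
  have g_cont: "continuous_on {0..1} ?g" using cont by (intro continuous_intros)
  have g_inj: "inj_on ?g {0..1}" using mono by (rule strict_mono_on_imp_inj_on)
  have g_le: "?g s \<le> ?g s'" if "s \<in> {0..1}" "s' \<in> {0..1}" "s \<le> s'" for s s'
    using mono that by (cases "s = s'") (auto simp: monotone_on_def intro!: less_imp_le)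
  have g_lt: "?g 0 < ?g 1" using mono by (auto simp: monotone_on_def)
  have g_image: "?g ` {0..1} = ?I"
  proof
    show "?g ` {0..1} \<subseteq> ?I" using g_le by auto
    show "?I \<subseteq> ?g ` {0..1}"
    proof
      fix z assume "z \<in> ?I"
      then have "\<exists>s\<ge>0. s \<le> 1 \<and> ?g s = z" using g_cont by (intro IVT') auto
      then show "z \<in> ?g ` {0..1}" by force
    qed
  qed
  have \<sigma>_cont: "continuous_on ?I \<sigma>"
    unfolding \<sigma>_def g_image[symmetric]
    by (rule continuous_on_inv[OF g_cont]) (auto simp: inv_into_f_f[OF g_inj])
  have \<sigma>_in: "\<sigma> t \<in> {0..1}" and g_\<sigma>: "?g (\<sigma> t) = t" if "t \<in> ?I" for t
    unfolding \<sigma>_def using that g_image by (metis inv_into_into, metis f_inv_into_f)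
  have \<sigma>_ends: "\<sigma> (?g 0) = 0" "\<sigma> (?g 1) = 1"
    unfolding \<sigma>_def using g_inj by (auto intro: inv_into_f_f)
  have "continuous_on ?I (\<lambda>t. c (\<sigma> t))"
    by (rule continuous_on_compose2[OF cont \<sigma>_cont]) (use \<sigma>_in in auto)
  then have "continuous_on ?I (\<lambda>t. fst (c (\<sigma> t)))" by (intro continuous_intros)
  moreover have "(fst (c (\<sigma> t)), t) \<in> c ` {0..1}" if "t \<in> ?I" for t
    using \<sigma>_in[OF that] g_\<sigma>[OF that] by (metis image_eqI prod.collapse)
  ultimately show ?thesis using g_lt \<sigma>_ends by (intro exI[of _ "\<lambda>t. fst (c (\<sigma> t))"]) auto
qed

lemma upward_layered_drawing_graph_drawing:
  assumes D: "upward_layered_drawing V E x y c"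
  obtains X where "graph_drawing E x y X"
proof -
  let ?P = "\<lambda>(p, q) f. y p < y q \<and> continuous_on {real_of_int (y p)..real_of_int (y q)} f \<and>
    f (y p) = x p \<and> f (y q) = x q \<and>
    (\<forall>t\<in>{real_of_int (y p)..real_of_int (y q)}. (f t, t) \<in> c (p, q) ` {0..1})"
  have "\<forall>e\<in>E. \<exists>f. ?P e f"
  proof
    fix e assume "e \<in> E"
    moreover obtain p q where e: "e = (p, q)" by fastforce
    ultimately have "continuous_on {0..1} (c (p, q)) \<and>
      strict_mono_on {0..1} (\<lambda>s. snd (c (p, q) s)) \<and>
      c (p, q) 0 = (x p, real_of_int (y p)) \<and> c (p, q) 1 = (x q, real_of_int (y q))"
      using D unfolding upward_layered_drawing_def by fastforce
    with strict_mono_curve_is_graph[of "c (p, q)"] show "\<exists>f. ?P e f" unfolding e by auto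
  qed
  then obtain X where X: "\<forall>e\<in>E. ?P e (X e)" by (rule bchoice[THEN exE])
  have "graph_drawing E x y X"
    unfolding graph_drawing_def
  proof (intro conjI allI impI)
    fix p q p' q' and t :: real
    assume e: "(p, q) \<in> E" and e': "(p', q') \<in> E" and ne: "(p, q) \<noteq> (p', q')"
      and t: "real_of_int (y p) \<le> t" "t \<le> y q" "y p' \<le> t" "t \<le> y q'"
      and eq: "X (p, q) t = X (p', q') t"
    have "(X (p, q) t, t) \<in> c (p, q) ` {0..1}" "(X (p', q') t, t) \<in> c (p', q') ` {0..1}"
      using bspec[OF X e] bspec[OF X e'] t by auto
    then have "(X (p, q) t, t) \<in> c (p, q) ` {0..1} \<inter> c (p', q') ` {0..1}"
      using eq by simp
    moreover have "c (p, q) ` {0..1} \<inter> c (p', q') ` {0..1} \<subseteq>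
        (\<lambda>v. (x v, real_of_int (y v))) ` ({p, q} \<inter> {p', q'})"
    proof -
      have "\<forall>e1\<in>E. \<forall>e2\<in>E. e1 \<noteq> e2 \<longrightarrow> c e1 ` {0..1} \<inter> c e2 ` {0..1} \<subseteq>
          (\<lambda>v. (x v, real_of_int (y v))) ` ({fst e1, snd e1} \<inter> {fst e2, snd e2})"
        using D unfolding upward_layered_drawing_def by blast
      from this[rule_format, OF e e' ne] show ?thesis by simp
    qed
    ultimately show "\<exists>v. (v = p \<or> v = q) \<and> (v = p' \<or> v = q') \<and> real_of_int (y v) = t"
      by auto
  qed (use X in auto)
  then show thesis by (rule that)
qed

lemma graph_drawing_edge:
  assumes "graph_drawing E x y X" "(p, q) \<in> E"
  shows "y p < y q" "continuous_on {real_of_int (y p)..real_of_int (y q)} (X (p, q))"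
    "X (p, q) (y p) = x p" "X (p, q) (y q) = x q"
  using assms unfolding graph_drawing_def by blast+

lemma graph_drawing_meet:
  assumes "graph_drawing E x y X" "(p, q) \<in> E" "(p', q') \<in> E" "(p, q) \<noteq> (p', q')"
    "real_of_int (y p) \<le> t" "t \<le> y q" "y p' \<le> t" "t \<le> y q'" "X (p, q) t = X (p', q') t"
  shows "\<exists>v. (v = p \<or> v = q) \<and> (v = p' \<or> v = q') \<and> real_of_int (y v) = t"
  using assms unfolding graph_drawing_def by blast

lemma graph_drawing_disjoint:
  assumes "graph_drawing E x y X" "(p, q) \<in> E" "(p', q') \<in> E"
    "p \<noteq> p'" "p \<noteq> q'" "q \<noteq> p'" "q \<noteq> q'"
    "real_of_int (y p) \<le> t" "t \<le> y q" "y p' \<le> t" "t \<le> y q'"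
  shows "X (p, q) t \<noteq> X (p', q') t"
  using graph_drawing_meet[OF assms(1,2,3)] assms(4-) by blast

lemma continuous_less_preserved:
  fixes f g :: "real \<Rightarrow> real"
  assumes cf: "continuous_on {a..b} f" and cg: "continuous_on {a..b} g"
    and ne: "\<forall>t\<in>{a..b}. f t \<noteq> g t" and s: "s \<in> {a..b}" "f s < g s" and t: "t \<in> {a..b}"
  shows "f t < g t"
proof (rule ccontr)
  assume "\<not> f t < g t"
  then have ht: "g t - f t \<le> 0" by simp
  have hs: "0 \<le> g s - f s" using s by simp
  have ch: "continuous_on {a..b} (\<lambda>t. g t - f t)" using cf cg by (intro continuous_intros)
  have "\<exists>z\<in>{a..b}. g z - f z = 0"
  proof (cases "t \<le> s")
    case True
    have "continuous_on {t..s} (\<lambda>t. g t - f t)"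
      by (rule continuous_on_subset[OF ch]) (use s t in auto)
    then obtain z where "t \<le> z" "z \<le> s" "g z - f z = 0"
      using IVT'[of "\<lambda>t. g t - f t" t 0 s] ht hs True by auto
    then show ?thesis using s t by force
  next
    case False
    have "continuous_on {s..t} (\<lambda>t. g t - f t)"
      by (rule continuous_on_subset[OF ch]) (use s t in auto)
    then obtain z where "s \<le> z" "z \<le> t" "g z - f z = 0"
      using IVT2'[of "\<lambda>t. g t - f t" t 0 s] ht hs False by auto
    then show ?thesis using s t by force
  qed
  then show False using ne by auto
qed

definition left_of :: "('a \<times> 'a \<Rightarrow> real \<Rightarrow> real) \<Rightarrow> ('a \<Rightarrow> int) \<Rightarrow> 'a \<Rightarrow> 'a \<Rightarrow> 'a \<Rightarrow> bool" where
  "left_of X y s a b \<longleftrightarrow>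
     (\<forall>t. real_of_int (y s) < t \<and> t \<le> real_of_int (min (y a) (y b)) \<longrightarrow> X (s, a) t < X (s, b) t)"

lemma left_of_irrefl:
  assumes "graph_drawing E x y X" "(s, a) \<in> E"
  shows "\<not> left_of X y s a a"
  using graph_drawing_edge[OF assms] unfolding left_of_def
  by (metis less_irrefl min.idem of_int_less_iff order_refl)

lemma left_of_total:
  assumes G: "graph_drawing E x y X" and e1: "(s, a) \<in> E" and e2: "(s, b) \<in> E" and ne: "a \<noteq> b"
  shows "left_of X y s a b \<or> left_of X y s b a"
proof -
  define t0 where "t0 = real_of_int (min (y a) (y b))"
  note E1 = graph_drawing_edge[OF G e1] and E2 = graph_drawing_edge[OF G e2]
  have t0: "t0 \<le> y a" "t0 \<le> y b" "y s < t0" using E1(1) E2(1) unfolding t0_def by auto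
  have apart: "X (s, a) t \<noteq> X (s, b) t" if "y s < t" "t \<le> t0" for t :: real
  proof
    assume eq: "X (s, a) t = X (s, b) t"
    have "(s, a) \<noteq> (s, b)" using ne by simp
    from graph_drawing_meet[OF G e1 e2 this _ _ _ _ eq] that t0 obtain v
      where "(v = s \<or> v = a) \<and> (v = s \<or> v = b) \<and> real_of_int (y v) = t" by force
    with that ne show False by auto
  qed
  have cont: "continuous_on {t..t0} (X (s, c))" if "c \<in> {a, b}" "y s < t" for c and t :: real
    using that E1(2) E2(2) t0 by (auto elim!: continuous_on_subset)
  have keep: "X (s, c) t < X (s, c') t"
    if "c \<in> {a, b}" "c' \<in> {a, b}" "X (s, c) t0 < X (s, c') t0" "y s < t" "t \<le> t0"
    for c c' and t :: real
  proof (rule continuous_less_preserved[OF cont cont])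
    show "\<forall>z\<in>{t..t0}. X (s, c) z \<noteq> X (s, c') z"
    proof
      fix z assume "z \<in> {t..t0}"
      then have "X (s, a) z \<noteq> X (s, b) z" using apart that(4) by simp
      then show "X (s, c) z \<noteq> X (s, c') z" using that(1-3) by auto
    qed
  qed (use that in auto)
  have "X (s, a) t0 < X (s, b) t0 \<or> X (s, b) t0 < X (s, a) t0"
    using apart[of t0] t0 by linarith
  then show ?thesis
  proof
    assume "X (s, a) t0 < X (s, b) t0"
    then show ?thesis using keep[of a b] unfolding left_of_def t0_def by simp
  next
    assume "X (s, b) t0 < X (s, a) t0"
    then show ?thesis using keep[of b a] unfolding left_of_def t0_def by (simp add: min.commute)
  qed
qed

text \<open>Turning a drawing upside down exchanges sources and sinks, so every statement about the
  out-neighbours of a source also applies to the in-neighbours of a sink.\<close>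

definition mirror :: "('a \<times> 'a \<Rightarrow> real \<Rightarrow> real) \<Rightarrow> 'a \<times> 'a \<Rightarrow> real \<Rightarrow> real" where
  "mirror X e t = X (snd e, fst e) (- t)"

lemma graph_drawing_mirror:
  assumes G: "graph_drawing E x y X"
  shows "graph_drawing (E\<inverse>) x (\<lambda>v. - y v) (mirror X)"
  unfolding graph_drawing_def
proof (intro conjI allI impI)
  fix p q assume "(p, q) \<in> E\<inverse>"
  then have e: "(q, p) \<in> E" by simp
  note E = graph_drawing_edge[OF G e]
  show "- y p < - y q" using E by simp
  show "mirror X (p, q) (real_of_int (- y p)) = x p" "mirror X (p, q) (real_of_int (- y q)) = x q"
    using E unfolding mirror_def by auto
  have "continuous_on {real_of_int (- y p)..real_of_int (- y q)} (\<lambda>t. X (q, p) (- t))"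
    by (rule continuous_on_compose2[OF E(2)]) (auto intro: continuous_intros)
  then show "continuous_on {real_of_int (- y p)..real_of_int (- y q)} (mirror X (p, q))"
    unfolding mirror_def by simp
next
  fix p q p' q' and t :: real
  assume "(p, q) \<in> E\<inverse>" "(p', q') \<in> E\<inverse>" "(p, q) \<noteq> (p', q')"
    and t: "real_of_int (- y p) \<le> t" "t \<le> real_of_int (- y q)"
      "real_of_int (- y p') \<le> t" "t \<le> real_of_int (- y q')"
    and eq: "mirror X (p, q) t = mirror X (p', q') t"
  then have "(q, p) \<in> E" "(q', p') \<in> E" "(q, p) \<noteq> (q', p')" by auto
  from graph_drawing_meet[OF G this, of "- t"] t eq
  show "\<exists>v. (v = p \<or> v = q) \<and> (v = p' \<or> v = q') \<and> real_of_int (- y v) = t"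
    unfolding mirror_def by force
qed

lemma left_of_mirror:
  "left_of (mirror X) (\<lambda>v. - y v) a u z \<longleftrightarrow>
     (\<forall>t. real_of_int (max (y u) (y z)) \<le> t \<and> t < y a \<longrightarrow> X (u, a) t < X (z, a) t)"
  unfolding left_of_def mirror_def
proof (intro iffI allI impI)
  fix t :: real
  assume "\<forall>t. real_of_int (- y a) < t \<and> t \<le> real_of_int (min (- y u) (- y z)) \<longrightarrow>
      X (snd (a, u), fst (a, u)) (- t) < X (snd (a, z), fst (a, z)) (- t)"
    and "real_of_int (max (y u) (y z)) \<le> t \<and> t < real_of_int (y a)"
  then show "X (u, a) t < X (z, a) t" by (auto dest: spec[of _ "- t"])
next
  fix t :: real
  assume "\<forall>t. real_of_int (max (y u) (y z)) \<le> t \<and> t < real_of_int (y a) \<longrightarrow> X (u, a) t < X (z, a) t"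
    and "real_of_int (- y a) < t \<and> t \<le> real_of_int (min (- y u) (- y z))"
  then show "X (snd (a, u), fst (a, u)) (- t) < X (snd (a, z), fst (a, z)) (- t)"
    by (auto dest: spec[of _ "- t"])
qed

lemma head_between_imp_tail_above:
  assumes G: "graph_drawing E x y X" and w1: "(s, a1) \<in> E" and w2: "(s, a2) \<in> E" and e: "(z, g) \<in> E"
    and ne: "z \<noteq> s" "z \<noteq> a1" "z \<noteq> a2" "g \<noteq> s" "g \<noteq> a1" "g \<noteq> a2"
    and h: "y g \<le> y a1" "y g \<le> y a2" "y s < y g"
    and between: "X (s, a1) (y g) < x g" "x g < X (s, a2) (y g)"
  shows "y s < y z"
proof (rule ccontr)
  assume "\<not> y s < y z"
  then have zs: "y z \<le> y s" by simp
  note E1 = graph_drawing_edge[OF G w1] and E2 = graph_drawing_edge[OF G w2]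
    and E3 = graph_drawing_edge[OF G e]
  let ?I = "{real_of_int (y s)..real_of_int (y g)}"
  have c1: "continuous_on ?I (X (s, a1))" using E1(2) by (rule continuous_on_subset) (use h in auto)
  have c2: "continuous_on ?I (X (s, a2))" using E2(2) by (rule continuous_on_subset) (use h in auto)
  have c3: "continuous_on ?I (X (z, g))" using E3(2) by (rule continuous_on_subset) (use zs in auto)
  have n1: "\<forall>t\<in>?I. X (s, a1) t \<noteq> X (z, g) t"
    using graph_drawing_disjoint[OF G w1 e] ne h zs by (smt (verit) atLeastAtMost_iff of_int_le_iff)
  have n2: "\<forall>t\<in>?I. X (z, g) t \<noteq> X (s, a2) t"
    using graph_drawing_disjoint[OF G e w2] ne h zs by (smt (verit) atLeastAtMost_iff of_int_le_iff)
  have gI: "real_of_int (y g) \<in> ?I" "real_of_int (y s) \<in> ?I" using h by auto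
  have "X (s, a1) (y s) < X (z, g) (y s)"
    by (rule continuous_less_preserved[OF c1 c3 n1 gI(1)]) (use between E3 gI in auto)
  moreover have "X (z, g) (y s) < X (s, a2) (y s)"
    by (rule continuous_less_preserved[OF c3 c2 n2 gI(1)]) (use between E3 gI in auto)
  ultimately show False using E1(3) E2(3) by simp
qed

lemma tail_between_imp_head_between:
  assumes G: "graph_drawing E x y X" and w1: "(s, a1) \<in> E" and w2: "(s, a2) \<in> E" and e: "(z, g) \<in> E"
    and ne: "z \<noteq> s" "z \<noteq> a1" "z \<noteq> a2" "g \<noteq> s" "g \<noteq> a1" "g \<noteq> a2"
    and h: "y g \<le> y a1" "y g \<le> y a2" "y s < y z"
    and between: "X (s, a1) (y z) < x z" "x z < X (s, a2) (y z)"
  shows "X (s, a1) (y g) < x g \<and> x g < X (s, a2) (y g)"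
proof -
  note E1 = graph_drawing_edge[OF G w1] and E2 = graph_drawing_edge[OF G w2]
    and E3 = graph_drawing_edge[OF G e]
  let ?I = "{real_of_int (y z)..real_of_int (y g)}"
  have c1: "continuous_on ?I (X (s, a1))" using E1(2) by (rule continuous_on_subset) (use h in auto)
  have c2: "continuous_on ?I (X (s, a2))" using E2(2) by (rule continuous_on_subset) (use h in auto)
  have n1: "\<forall>t\<in>?I. X (s, a1) t \<noteq> X (z, g) t"
    using graph_drawing_disjoint[OF G w1 e] ne h E3(1)
      by (smt (verit) atLeastAtMost_iff of_int_le_iff)
  have n2: "\<forall>t\<in>?I. X (z, g) t \<noteq> X (s, a2) t"
    using graph_drawing_disjoint[OF G e w2] ne h E3(1)
      by (smt (verit) atLeastAtMost_iff of_int_le_iff)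
  have zI: "real_of_int (y g) \<in> ?I" "real_of_int (y z) \<in> ?I" using E3(1) by auto
  have "X (s, a1) (y g) < X (z, g) (y g)"
    by (rule continuous_less_preserved[OF c1 E3(2) n1 zI(2)]) (use between E3 zI in auto)
  moreover have "X (z, g) (y g) < X (s, a2) (y g)"
    by (rule continuous_less_preserved[OF E3(2) c2 n2 zI(2)]) (use between E3 zI in auto)
  ultimately show ?thesis using E3(4) by simp
qed

lemma trapped_out_neighbour_in_neighbours_above:
  assumes G: "graph_drawing E x y X" and P: "paths_at_most_one E" and c: "(s, c) \<in> E"
    and tr: "trapped (left_of X y s) y {q. (s, q) \<in> E} c" and z: "(z, c) \<in> E" "z \<noteq> s"
  shows "y s < y z"
proof -
  obtain a1 a2 where e: "(s, a1) \<in> E" "(s, a2) \<in> E"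
    and o: "left_of X y s a1 c" "left_of X y s c a2" and h: "y c \<le> y a1" "y c \<le> y a2"
    using tr unfolding trapped_def by blast
  have ne: "c \<noteq> a1" "c \<noteq> a2" using left_of_irrefl[OF G c] o by auto
  have za: "z \<noteq> a1" "z \<noteq> a2" using P e z unfolding paths_at_most_one_def by blast+
  have ysc: "y s < y c" using graph_drawing_edge(1)[OF G c] .
  have "X (s, a1) (y c) < X (s, c) (y c)" "X (s, c) (y c) < X (s, a2) (y c)"
    using o ysc h unfolding left_of_def by simp_all
  then have "X (s, a1) (y c) < x c" "x c < X (s, a2) (y c)"
    using graph_drawing_edge(4)[OF G c] by simp_all
  with head_between_imp_tail_above[OF G e z(1) z(2) za _ ne h ysc] ysc show ?thesis by force
qed

lemma in_neighbour_between:
  assumes G: "graph_drawing E x y X" and P: "paths_at_most_one E"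
    and w1: "(u, a) \<in> E" and w2: "(u, a') \<in> E" and o1: "left_of X y u a a'"
    and ha: "y a \<le> y a'" and ne: "a \<noteq> a'"
    and z: "(z, a) \<in> E" and o: "left_of (mirror X) (\<lambda>v. - y v) a u z"
  shows "y u < y z \<and> X (u, a) (y z) < x z \<and> x z < X (u, a') (y z)"
proof -
  have zu: "z \<noteq> u"
    using left_of_irrefl[OF graph_drawing_mirror[OF G], of a u] w1 o by auto
  have za': "z \<noteq> a'" using P w2 z unfolding paths_at_most_one_def by blast
  note E1 = graph_drawing_edge[OF G w1] and E2 = graph_drawing_edge[OF G w2]
    and E3 = graph_drawing_edge[OF G z]
  have au: "a \<noteq> u" using E1(1) by auto
  note z_right = o[unfolded left_of_mirror, rule_format]
  let ?I = "{real_of_int (max (y u) (y z))..real_of_int (y a)}"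
  have ms: "max (y u) (y z) < y a" using E1(1) E3(1) by simp
  have c3: "continuous_on ?I (X (z, a))" using E3(2) by (rule continuous_on_subset) auto
  have c2: "continuous_on ?I (X (u, a'))" using E2(2)
    by (rule continuous_on_subset) (use ha in auto)
  have n2: "\<forall>t\<in>?I. X (z, a) t \<noteq> X (u, a') t"
  proof
    fix t assume "t \<in> ?I"
    then show "X (z, a) t \<noteq> X (u, a') t"
      using graph_drawing_disjoint[OF G z w2 zu za' au ne] ha by auto
  qed
  have at: "X (u, a) (y a) < X (u, a') (y a)" using o1 E1(1) ha unfolding left_of_def by simp
  have z_left: "X (z, a) t < X (u, a') t" if "t \<in> ?I" for t
    by (rule continuous_less_preserved[OF c3 c2 n2 _ _ that, of "real_of_int (y a)"])
      (use ms E3(4) E1(4) at in auto)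
  have yzu: "y u < y z"
  proof (rule ccontr)
    assume "\<not> y u < y z"
    then have m: "max (y u) (y z) = y u" by simp
    have "X (u, a) (y u) < X (z, a) (y u)" using z_right[of "real_of_int (y u)"] m E1(1) by simp
    moreover have "X (z, a) (y u) < X (u, a') (y u)" using z_left[of "real_of_int (y u)"] m E1(1)
      by simp
    ultimately show False using E1(3) E2(3) by simp
  qed
  then have m: "max (y u) (y z) = y z" by simp
  have "X (u, a) (y z) < X (z, a) (y z)" using z_right[of "real_of_int (y z)"] m E3(1) by simp
  moreover have "X (z, a) (y z) < X (u, a') (y z)" using z_left[of "real_of_int (y z)"] m E3(1)
    by simp
  ultimately show ?thesis using yzu E3(3) by simp
qed

section \<open>Thick trees have large span\<close>

definition neighbours :: "('a \<times> 'a) set \<Rightarrow> 'a \<Rightarrow> 'a set" where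
  "neighbours E v = {z. (v, z) \<in> E \<or> (z, v) \<in> E}"

text \<open>When directed paths have length at most one, every 4-cycle is oriented as below.\<close>

definition square_free :: "('a \<times> 'a) set \<Rightarrow> bool" where
  "square_free E \<longleftrightarrow>
     (\<forall>u b a a'. (u, a) \<in> E \<longrightarrow> (u, a') \<in> E \<longrightarrow> (b, a) \<in> E \<longrightarrow> (b, a') \<in> E \<longrightarrow> u = b \<or> a = a')"

definition depth_steps :: "('a \<times> 'a) set \<Rightarrow> ('a \<Rightarrow> nat) \<Rightarrow> bool" where
  "depth_steps E depth \<longleftrightarrow> (\<forall>(v, z)\<in>E. depth v \<le> depth z + 1 \<and> depth z \<le> depth v + 1)"

text \<open>The depth of a vertex bounds from below the radius of the ball around it in which every
  vertex has degree at least \<open>d\<close>.\<close>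

definition thick :: "('a \<times> 'a) set \<Rightarrow> ('a \<Rightarrow> nat) \<Rightarrow> nat \<Rightarrow> bool" where
  "thick E depth d \<longleftrightarrow> finite E \<and> paths_at_most_one E \<and> 1 \<le> d \<and>
     (\<forall>v\<in>Field E. 1 \<le> depth v \<longrightarrow> d \<le> card (neighbours E v)) \<and> depth_steps E depth"

lemma neighbours_converse: "neighbours (E\<inverse>) = neighbours E"
  unfolding neighbours_def by auto

lemma thick_converse: "thick E depth d \<Longrightarrow> thick (E\<inverse>) depth d"
  unfolding thick_def depth_steps_def neighbours_converse paths_at_most_one_def by auto

lemma thick_depth_le:
  assumes "thick E depth d" "(v, z) \<in> E"
  shows "depth v \<le> depth z + 1" "depth z \<le> depth v + 1"
  using assms unfolding thick_def depth_steps_def by auto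

lemma thick_out_neighbours:
  assumes S: "thick E depth d" and e: "(s, q0) \<in> E" and r: "1 \<le> depth s"
  shows "d \<le> card {q. (s, q) \<in> E}" "finite {q. (s, q) \<in> E}"
proof -
  have "neighbours E s = {q. (s, q) \<in> E}"
    using S e unfolding thick_def paths_at_most_one_def neighbours_def by blast
  moreover have "s \<in> Field E" using e by (auto simp: Field_def)
  ultimately show "d \<le> card {q. (s, q) \<in> E}" using S r unfolding thick_def by metis
  have "{q. (s, q) \<in> E} \<subseteq> snd ` E" by force
  then show "finite {q. (s, q) \<in> E}" using S unfolding thick_def
    by (metis finite_imageI finite_subset)
qed

lemma left_of_out_neighbours:
  assumes "graph_drawing E x y X"
  shows "totalp_on {q. (s, q) \<in> E} (left_of X y s)" "irreflp_on {q. (s, q) \<in> E} (left_of X y s)"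
  using left_of_total[OF assms] left_of_irrefl[OF assms] by (auto intro: totalp_onI irreflp_onI)

lemma exists_trapped_out_neighbour_below_top:
  assumes G: "graph_drawing E x y X" and S: "thick E depth d" and e: "(s, q0) \<in> E"
    and top: "\<forall>q. (s, q) \<in> E \<longrightarrow> q = t \<or> y q < y t" and n: "y t - y s = int n"
    and "2 * n \<le> d" and "1 \<le> depth s"
  obtains c where "(s, c) \<in> E" "trapped (left_of X y s) y {q. (s, q) \<in> E} c" "y c < y t"
proof -
  let ?A = "{q. (s, q) \<in> E}"
  have cA: "d \<le> card ?A" and fA: "finite ?A" using thick_out_neighbours[OF S e] assms(7) by auto
  have "1 \<le> d" using S unfolding thick_def by blast
  have yq: "y s < y q" if "q \<in> ?A" for q using graph_drawing_edge(1)[OF G] that by simp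
  have n1: "n \<ge> 1"
  proof (rule ccontr)
    assume "\<not> n \<ge> 1"
    then have "?A = {}" using top yq n by fastforce
    with cA \<open>1 \<le> d\<close> show False by simp
  qed
  have levels: "y ` ?A \<subseteq> {y s + 1..y s + int n}" using top yq n by fastforce
  have "a = t" if "a \<in> ?A" "y a = y s + int n" for a
  proof -
    from top that(1) have "a = t \<or> y a < y t" by simp
    with that(2) n show ?thesis by auto
  qed
  then have unique: "\<forall>a\<in>?A. \<forall>b\<in>?A. y a = y s + int n \<longrightarrow> y b = y s + int n \<longrightarrow> a = b"
    by blast
  obtain c where c: "(s, c) \<in> E" and tr: "trapped (left_of X y s) y ?A c"
    using card_untrapped_unique_top_le[OF fA left_of_out_neighbours[OF G] _ levels unique n1]
      cA assms(6) n1 by fastforce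
  have "c \<noteq> t"
  proof
    assume "c = t"
    obtain a1 where "(s, a1) \<in> E" "left_of X y s a1 c" "y c \<le> y a1"
      using tr unfolding trapped_def by blast
    with left_of_irrefl[OF G] top \<open>c = t\<close> show False by fastforce
  qed
  with top c have "y c < y t" by blast
  with c tr show thesis by (rule that)
qed

text \<open>If the out-neighbour \<open>c\<close> of \<open>s\<close> is trapped, then all other in-neighbours of \<open>c\<close> lie above
  \<open>s\<close>: the mirror image of the same situation, with a smaller height difference.\<close>

lemma no_unique_top_out_neighbour:
  fixes n :: nat
  shows "graph_drawing E x y X \<Longrightarrow> thick E depth d \<Longrightarrow> (s, q0) \<in> E \<Longrightarrow>
    \<forall>q. (s, q) \<in> E \<longrightarrow> q = t \<or> y q < y t \<Longrightarrow> y t - y s = int n \<Longrightarrow> 2 * n \<le> d \<Longrightarrow>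
    n + 1 \<le> depth s \<Longrightarrow> False"
proof (induction n arbitrary: E y X s t q0 rule: less_induct)
  case (less n)
  note G = less.prems(1) and S = less.prems(2)
  obtain c where c: "(s, c) \<in> E" and tr: "trapped (left_of X y s) y {q. (s, q) \<in> E} c"
    and "y c < y t"
    using exists_trapped_out_neighbour_below_top[OF less.prems(1-6)] less.prems(7) by auto
  have above: "\<forall>z. (z, c) \<in> E \<longrightarrow> z = s \<or> y s < y z"
    using trapped_out_neighbour_in_neighbours_above[OF G _ c tr] S unfolding thick_def by blast
  define n' where "n' = nat (y c - y s)"
  have n'n: "n' < n" and n': "- y s - - y c = int n'"
    using \<open>y c < y t\<close> graph_drawing_edge(1)[OF G c] less.prems(5) unfolding n'_def by auto
  show False
  proof (rule less.IH[OF n'n graph_drawing_mirror[OF G] thick_converse[OF S]])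
    show "(c, s) \<in> E\<inverse>" using c by simp
    show "\<forall>q. (c, q) \<in> E\<inverse> \<longrightarrow> q = s \<or> - y q < - y s" using above by auto
    show "n' + 1 \<le> depth c" using less.prems(7) thick_depth_le[OF S c] n'n by simp
  qed (use n' n'n less.prems(6) in auto)
qed

lemma no_unique_bottom_in_neighbour:
  assumes G: "graph_drawing E x y X" and S: "thick E depth d" and e: "(z0, g) \<in> E"
    and bottom: "\<forall>z. (z, g) \<in> E \<longrightarrow> z = u \<or> y u < y z" and n: "y g - y u = int n"
    and "2 * n \<le> d" and "n + 1 \<le> depth g"
  shows False
proof (rule no_unique_top_out_neighbour[OF graph_drawing_mirror[OF G] thick_converse[OF S]])
  show "(g, z0) \<in> E\<inverse>" using e by simp
  show "\<forall>q. (g, q) \<in> E\<inverse> \<longrightarrow> q = u \<or> - y q < - y u" using bottom by auto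
  show "- y u - - y g = int n" using n by simp
qed (use assms in auto)

lemma out_neighbours_untrapped:
  assumes G: "graph_drawing E x y X" and S: "thick E depth d" and c: "(s, c) \<in> E"
    and span: "\<forall>(p, q)\<in>E. y q - y p \<le> int k" and "2 * k \<le> d" and "k + 2 \<le> depth s"
  shows "\<not> trapped (left_of X y s) y {q. (s, q) \<in> E} c"
proof
  assume tr: "trapped (left_of X y s) y {q. (s, q) \<in> E} c"
  have "\<forall>z. (z, c) \<in> E \<longrightarrow> z = s \<or> y s < y z"
    using trapped_out_neighbour_in_neighbours_above[OF G _ c tr] S unfolding thick_def by blast
  moreover have "y s < y c" using graph_drawing_edge(1)[OF G c] .
  ultimately show False
    using no_unique_bottom_in_neighbour[OF G S c, of s "nat (y c - y s)"] span c assms(5,6)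
      thick_depth_le[OF S c] by fastforce
qed

lemma out_neighbours_levels:
  assumes "graph_drawing E x y X" and "\<forall>(p, q)\<in>E. y q - y p \<le> int k"
  shows "y ` {q. (s, q) \<in> E} \<subseteq> {y s + 1..y s + int k}"
  using assms graph_drawing_edge(1)[OF assms(1)] by fastforce

lemma card_out_neighbours_le:
  assumes G: "graph_drawing E x y X" and S: "thick E depth d" and e: "(s, q0) \<in> E"
    and span: "\<forall>(p, q)\<in>E. y q - y p \<le> int k" and "2 * k \<le> d" and "k + 2 \<le> depth s"
  shows "card {q. (s, q) \<in> E} \<le> 2 * k"
  using card_untrapped_le[OF _ left_of_out_neighbours(1)[OF G] _ out_neighbours_levels[OF G span]]
    out_neighbours_untrapped[OF G S _ span] thick_out_neighbours(2)[OF S e] assms(5,6) by auto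

lemma out_neighbour_records_tight:
  assumes G: "graph_drawing E x y X" and S: "thick E depth d" and e: "(s, q0) \<in> E"
    and span: "\<forall>(p, q)\<in>E. y q - y p \<le> int k" and d: "d = 2 * k" and "k + 2 \<le> depth s"
  defines "A \<equiv> {q. (s, q) \<in> E}"
  shows "y ` left_records (left_of X y s) y A = {y s + 1..y s + int k}"
    "y ` right_records (left_of X y s) y A = {y s + 1..y s + int k}"
    "left_records (left_of X y s) y A \<inter> right_records (left_of X y s) y A = {}"
  using untrapped_records_tight[OF _ left_of_out_neighbours(1)[OF G] _
      out_neighbours_levels[OF G span]]
    out_neighbours_untrapped[OF G S _ span] thick_out_neighbours[OF S e] assms(5,6)
  unfolding A_def by auto

lemma two_out_neighbours_at_level:
  assumes G: "graph_drawing E x y X" and S: "thick E depth d" and e: "(s, q0) \<in> E"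
    and span: "\<forall>(p, q)\<in>E. y q - y p \<le> int k" and d: "d = 2 * k" and depth: "k + 2 \<le> depth s"
    and j: "1 \<le> j" "j \<le> k"
  obtains a a' where "(s, a) \<in> E" "(s, a') \<in> E" "a \<noteq> a'" "y a = y s + int j" "y a' = y s + int j"
proof -
  let ?r = "left_of X y s" and ?A = "{q. (s, q) \<in> E}"
  note tight = out_neighbour_records_tight[OF G S e span d depth]
  have level: "y s + int j \<in> {y s + 1..y s + int k}" using j by simp
  obtain a where a: "a \<in> left_records ?r y ?A" "y s + int j = y a"
    using level unfolding tight(1)[symmetric] by (rule imageE)
  obtain a' where a': "a' \<in> right_records ?r y ?A" "y s + int j = y a'"
    using level unfolding tight(2)[symmetric] by (rule imageE)
  have "a \<noteq> a'" using a a' tight(3) by blast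
  moreover have "(s, a) \<in> E" "(s, a') \<in> E"
    using a(1) a'(1) unfolding left_records_def right_records_def by auto
  ultimately show thesis using that a(2) a'(2) by simp
qed

lemma exists_in_neighbour_between:
  assumes G: "graph_drawing E x y X" and S: "thick E depth d"
    and span: "\<forall>(p, q)\<in>E. y q - y p \<le> int k" and d: "d = 2 * k" and k: "2 \<le> k"
    and wa: "(u, a) \<in> E" and wa': "(u, a') \<in> E" and o: "left_of X y u a a'" and "a \<noteq> a'"
    and ya: "y a = y u + int k" and ya': "y a' = y u + int k" and depth: "k + 2 \<le> depth a"
  obtains b where "(b, a) \<in> E" "y b = y a - 1" "y u < y b"
    "X (u, a) (y b) < x b" "x b < X (u, a') (y b)"
proof -
  have P: "paths_at_most_one E" using S unfolding thick_def by blast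
  let ?y = "\<lambda>v. - y v" and ?B = "{z. (a, z) \<in> E\<inverse>}"
  let ?r = "left_of (mirror X) ?y a"
  let ?R = "right_records ?r ?y ?B"
  note G' = graph_drawing_mirror[OF G] and S' = thick_converse[OF S]
  have au: "(a, u) \<in> E\<inverse>" using wa by simp
  have span': "\<forall>(p, q)\<in>E\<inverse>. ?y q - ?y p \<le> int k" using span by auto
  note tight = out_neighbour_records_tight[OF G' S' au span' d depth]
  note total = left_of_out_neighbours(1)[OF G', of a]
  have between: "y u < y z \<and> X (u, a) (y z) < x z \<and> x z < X (u, a') (y z)"
    if "(z, a) \<in> E" "?r u z" for z
    using in_neighbour_between[OF G P wa wa' o _ \<open>a \<noteq> a'\<close> that] ya ya' by simp
  have uB: "u \<in> ?B" using wa by simp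
  have "?y a + 1 \<in> {?y a + 1..?y a + int k}" using k by simp
  then obtain b where b: "b \<in> ?R" "?y a + 1 = ?y b"
    unfolding tight(2)[symmetric] by (rule imageE)
  have bB: "(b, a) \<in> E" using b unfolding right_records_def by auto
  have "\<not> ?r b u"
  proof
    assume "?r b u"
    then have "?y u < ?y b" using b uB unfolding right_records_def by auto
    then show False using b ya k by simp
  qed
  moreover have "b \<noteq> u" using b ya k by auto
  ultimately have "?r u b" using totalp_onD[OF total] uB bB by auto
  with between[OF bB] b show thesis by (intro that[OF bB]) auto
qed

lemma no_source_between:
  assumes G: "graph_drawing E x y X" and S: "thick E depth d" and sq: "square_free E"
    and span: "\<forall>(p, q)\<in>E. y q - y p \<le> int k" and d: "d = 2 * k" and k: "2 \<le> k"
    and wa: "(u, a) \<in> E" and wa': "(u, a') \<in> E" and "a \<noteq> a'"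
    and ya: "y a = y u + int k" and ya': "y a' = y u + int k"
    and ba: "(b, a) \<in> E" and yb: "y b = y a - 1" "y u < y b"
    and between: "X (u, a) (y b) < x b" "x b < X (u, a') (y b)" and depth: "k + 3 \<le> depth b"
  shows False
proof -
  have P: "paths_at_most_one E" using S unfolding thick_def by blast
  obtain g1 g2 where "(b, g1) \<in> E" "(b, g2) \<in> E" "g1 \<noteq> g2" "y g1 = y a" "y g2 = y a"
    using two_out_neighbours_at_level[OF G S ba span d, of 1] depth k yb by auto
  then obtain g where bg: "(b, g) \<in> E" and "g \<noteq> a" and yg: "y g = y a" by metis
  have "b \<noteq> u" using yb(2) by auto
  then have "g \<noteq> a'" using sq wa wa' ba bg \<open>a \<noteq> a'\<close> \<open>g \<noteq> a\<close> unfolding square_free_def by blast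
  have "b \<noteq> a" "b \<noteq> a'" using P ba wa' yb unfolding paths_at_most_one_def by auto
  have "g \<noteq> u" using yg ya k by auto
  have g_between: "X (u, a) (y g) < x g \<and> x g < X (u, a') (y g)"
    using tail_between_imp_head_between[OF G wa wa' bg \<open>b \<noteq> u\<close> \<open>b \<noteq> a\<close> \<open>b \<noteq> a'\<close>
        \<open>g \<noteq> u\<close> \<open>g \<noteq> a\<close> \<open>g \<noteq> a'\<close>] yg ya ya' yb between by simp
  have "z = u \<or> y u < y z" if zg: "(z, g) \<in> E" for z
  proof (cases "z = u")
    case False
    have "z \<noteq> a" "z \<noteq> a'" using P zg wa wa' unfolding paths_at_most_one_def by auto
    with head_between_imp_tail_above[OF G wa wa' zg False _ _ \<open>g \<noteq> u\<close> \<open>g \<noteq> a\<close> \<open>g \<noteq> a'\<close>]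
    show ?thesis using g_between yg ya ya' k by simp
  qed simp
  moreover have "k + 1 \<le> depth g" using thick_depth_le[OF S bg] depth by simp
  ultimately show False
    using no_unique_bottom_in_neighbour[OF G S bg, of u k] yg ya d by auto
qed

lemma span_lower_bound:
  assumes G: "graph_drawing E x y X" and S: "thick E depth d" and sq: "square_free E"
    and u: "(u, q0) \<in> E" and d: "2 < d" and span: "\<forall>(p, q)\<in>E. y q - y p \<le> int (d div 2)"
    and depth: "d div 2 + 5 \<le> depth u"
  shows False
proof -
  define k where "k = d div 2"
  have span: "\<forall>(p, q)\<in>E. y q - y p \<le> int k" and depth: "k + 5 \<le> depth u"
    using span depth unfolding k_def by auto
  consider "d = 2 * k + 1" | "d = 2 * k" "2 \<le> k" using d unfolding k_def by linarith
  then show False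
  proof cases
    case 1
    have "card {q. (u, q) \<in> E} \<le> 2 * k"
      by (rule card_out_neighbours_le[OF G S u span]) (use 1 depth in auto)
    then show False using thick_out_neighbours[OF S u] depth 1 by auto
  next
    case 2
    obtain a1 a2 where "(u, a1) \<in> E" "(u, a2) \<in> E" "a1 \<noteq> a2"
      "y a1 = y u + int k" "y a2 = y u + int k"
      using two_out_neighbours_at_level[OF G S u span 2(1), of k] depth 2 by auto
    then obtain a a' where wa: "(u, a) \<in> E" and wa': "(u, a') \<in> E" and "a \<noteq> a'"
      and o: "left_of X y u a a'" and ya: "y a = y u + int k" and ya': "y a' = y u + int k"
      using left_of_total[OF G] by metis
    have "k + 4 \<le> depth a" using thick_depth_le[OF S wa] depth by simp
    then have "k + 2 \<le> depth a" by simp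
    then obtain b where "(b, a) \<in> E" "y b = y a - 1" "y u < y b"
      "X (u, a) (y b) < x b" "x b < X (u, a') (y b)"
      using exists_in_neighbour_between[OF G S span 2 wa wa' o \<open>a \<noteq> a'\<close> ya ya'] by blast
    moreover have "k + 3 \<le> depth b"
      using thick_depth_le[OF S \<open>(b, a) \<in> E\<close>] \<open>k + 4 \<le> depth a\<close> by simp
    ultimately show False
      using no_source_between[OF G S sq span 2 wa wa' \<open>a \<noteq> a'\<close> ya ya'] by blast
  qed
qed

section \<open>Trees of non-interleaving arcs\<close>

definition laminar :: "(nat \<times> nat) set \<Rightarrow> bool" where
  "laminar E \<longleftrightarrow> (\<forall>a b a' b'. (a, b) \<in> E \<longrightarrow> (a', b') \<in> E \<longrightarrow> \<not> (a < a' \<and> a' < b \<and> b < b'))"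

definition arc_tree :: "nat \<Rightarrow> (nat \<times> nat) set \<Rightarrow> bool" where
  "arc_tree n E \<longleftrightarrow> (\<forall>(a, b)\<in>E. a < b \<and> b < n) \<and> card E + 1 = n \<and>
     (\<forall>v<n. (v, 0) \<in> (E \<union> E\<inverse>)\<^sup>*) \<and> laminar E \<and> paths_at_most_one E \<and> square_free E"

lemma arc_tree_edge: "arc_tree n E \<Longrightarrow> (a, b) \<in> E \<Longrightarrow> a < b \<and> b < n"
  unfolding arc_tree_def by blast

lemma arc_tree_finite: "arc_tree n E \<Longrightarrow> finite E"
  using finite_subset[of E "{0..<n} \<times> {0..<n}"] by (force dest: arc_tree_edge)

lemma arc_tree_pos: "arc_tree n E \<Longrightarrow> 1 \<le> n"
  unfolding arc_tree_def by linarith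

lemma arc_tree_single: "arc_tree 1 {}"
  unfolding arc_tree_def laminar_def paths_at_most_one_def square_free_def by simp

definition shift_edges :: "nat \<Rightarrow> (nat \<times> nat) set \<Rightarrow> (nat \<times> nat) set" where
  "shift_edges k E = (\<lambda>(a, b). (a + k, b + k)) ` E"

lemma mem_shift_edges: "(a, b) \<in> shift_edges k E \<longleftrightarrow> k \<le> a \<and> k \<le> b \<and> (a - k, b - k) \<in> E"
  unfolding shift_edges_def by (force simp: image_iff)

definition join :: "nat \<Rightarrow> (nat \<times> nat) set \<Rightarrow> nat \<Rightarrow> (nat \<times> nat) set \<Rightarrow> (nat \<times> nat) set" where
  "join nP FP nQ FQ = FP \<union> shift_edges nP FQ \<union> {(0, nP + nQ - 1)}"

lemma mem_join:
  "(a, b) \<in> join nP FP nQ FQ \<longleftrightarrow>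
     (a, b) \<in> FP \<or> (nP \<le> a \<and> nP \<le> b \<and> (a - nP, b - nP) \<in> FQ) \<or> (a = 0 \<and> b = nP + nQ - 1)"
  unfolding join_def Un_iff mem_shift_edges by blast

definition join_depth :: "nat \<Rightarrow> (nat \<Rightarrow> nat) \<Rightarrow> (nat \<Rightarrow> nat) \<Rightarrow> nat \<Rightarrow> nat" where
  "join_depth nP dP dQ v = (if v < nP then dP v else dQ (v - nP))"

definition degree_profile :: "nat \<Rightarrow> nat \<Rightarrow> (nat \<times> nat) set \<Rightarrow> (nat \<Rightarrow> nat) \<Rightarrow> nat \<Rightarrow> nat \<Rightarrow> bool" where
  "degree_profile q n E depth r m \<longleftrightarrow> card (neighbours E r) = m \<and>
     (\<forall>v<n. v \<noteq> r \<longrightarrow> card (neighbours E v) = (if depth v = 0 then 1 else Suc q))"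

context
  fixes nP nQ :: nat and FP FQ :: "(nat \<times> nat) set"
  assumes P: "arc_tree nP FP" and Q: "arc_tree nQ FQ"
begin

lemma join_edge: "(a, b) \<in> join nP FP nQ FQ \<Longrightarrow> a < b \<and> b < nP + nQ"
  using arc_tree_edge[OF P] arc_tree_edge[OF Q] arc_tree_pos[OF P] arc_tree_pos[OF Q]
  unfolding mem_join by fastforce

lemma card_join: "card (join nP FP nQ FQ) + 1 = nP + nQ"
proof -
  have fP: "finite FP" and fQ: "finite (shift_edges nP FQ)"
    using arc_tree_finite[OF P] arc_tree_finite[OF Q] unfolding shift_edges_def by auto
  have disj: "FP \<inter> shift_edges nP FQ = {}"
    using arc_tree_edge[OF P] by (fastforce simp: mem_shift_edges)
  have new: "(0, nP + nQ - 1) \<notin> FP \<union> shift_edges nP FQ"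
    using arc_tree_edge[OF P, of 0 "nP + nQ - 1"] arc_tree_pos[OF P] arc_tree_pos[OF Q]
    by (auto simp: mem_shift_edges)
  have "card (shift_edges nP FQ) = card FQ"
    unfolding shift_edges_def by (rule card_image) (auto simp: inj_on_def)
  then have "card (join nP FP nQ FQ) = card FP + card FQ + 1"
    unfolding join_def using new card_Un_disjoint[OF fP fQ disj] fP fQ by simp
  then show ?thesis using P Q unfolding arc_tree_def by simp
qed

lemma join_connected:
  assumes v: "v < nP + nQ"
  shows "(v, 0) \<in> (join nP FP nQ FQ \<union> (join nP FP nQ FQ)\<inverse>)\<^sup>*"
proof -
  let ?S = "join nP FP nQ FQ \<union> (join nP FP nQ FQ)\<inverse>"
  show ?thesis
  proof (cases "v < nP")
    case True
    then have "(v, 0) \<in> (FP \<union> FP\<inverse>)\<^sup>*" using P unfolding arc_tree_def by blast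
    moreover have "FP \<union> FP\<inverse> \<subseteq> ?S" unfolding join_def by auto
    ultimately show ?thesis using rtrancl_mono by blast
  next
    case False
    have "(v - nP, 0) \<in> (FQ \<union> FQ\<inverse>)\<^sup>*" using Q False v unfolding arc_tree_def by auto
    moreover have "(nQ - 1, 0) \<in> (FQ \<union> FQ\<inverse>)\<^sup>*"
      using Q arc_tree_pos[OF Q] unfolding arc_tree_def by simp
    ultimately have "(v - nP, nQ - 1) \<in> (FQ \<union> FQ\<inverse>)\<^sup>*"
      by (meson rtrancl_trans symD[OF sym_rtrancl[OF sym_Un_converse]])
    then have "(v - nP + nP, nQ - 1 + nP) \<in> ?S\<^sup>*"
    proof (induction rule: rtrancl_induct)
      case (step b c)
      then have "(b + nP, c + nP) \<in> ?S" unfolding join_def shift_edges_def by force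
      with step.IH show ?case by (rule rtrancl_into_rtrancl)
    qed simp
    then have "(v, nP + nQ - 1) \<in> ?S\<^sup>*" using False arc_tree_pos[OF Q] by (simp add: add.commute)
    moreover have "(nP + nQ - 1, 0) \<in> ?S" unfolding join_def by auto
    ultimately show ?thesis by (rule rtrancl_into_rtrancl)
  qed
qed

lemma join_edge_cases:
  assumes "(p, q) \<in> join nP FP nQ FQ"
  obtains "(p, q) = (0, nP + nQ - 1)" | "p < nP" "q < nP" "(p, q) \<in> FP"
    | "nP \<le> p" "nP \<le> q" "(p - nP, q - nP) \<in> FQ"
proof -
  from assms consider "(p, q) \<in> FP" | "nP \<le> p \<and> nP \<le> q \<and> (p - nP, q - nP) \<in> FQ"
    | "p = 0 \<and> q = nP + nQ - 1"
    unfolding mem_join by blast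
  then show thesis using that arc_tree_edge[OF P, of p q] by cases auto
qed

lemma laminar_join: "laminar (join nP FP nQ FQ)"
  unfolding laminar_def
proof (intro allI impI notI)
  fix a b a' b'
  assume e: "(a, b) \<in> join nP FP nQ FQ" and e': "(a', b') \<in> join nP FP nQ FQ"
    and i: "a < a' \<and> a' < b \<and> b < b'"
  have "b' < nP + nQ" using join_edge[OF e'] by simp
  with i have nb: "(a, b) \<noteq> (0, nP + nQ - 1)" "(a', b') \<noteq> (0, nP + nQ - 1)" by auto
  from e nb(1) consider "b < nP" "(a, b) \<in> FP" | "nP \<le> a" "(a - nP, b - nP) \<in> FQ"
    by (elim join_edge_cases) auto
  then show False
  proof cases
    case 1
    with e' nb(2) i have "(a', b') \<in> FP" by (elim join_edge_cases) auto
    with 1 i P show False unfolding arc_tree_def laminar_def by blast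
  next
    case 2
    with e' nb(2) i have "(a' - nP, b' - nP) \<in> FQ" by (elim join_edge_cases) auto
    moreover have "a - nP < a' - nP \<and> a' - nP < b - nP \<and> b - nP < b' - nP" using 2 i by auto
    ultimately show False using 2 Q unfolding arc_tree_def laminar_def by blast
  qed
qed

lemma paths_at_most_one_join: "paths_at_most_one (join nP FP nQ FQ)"
  unfolding paths_at_most_one_def
proof (intro allI impI notI)
  fix u v w assume e: "(u, v) \<in> join nP FP nQ FQ" and e': "(v, w) \<in> join nP FP nQ FQ"
  have nb: "(u, v) \<noteq> (0, nP + nQ - 1)" "(v, w) \<noteq> (0, nP + nQ - 1)"
    using join_edge[OF e] join_edge[OF e'] by auto
  from e nb(1) consider "v < nP" "(u, v) \<in> FP" | "nP \<le> v" "(u - nP, v - nP) \<in> FQ"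
    by (elim join_edge_cases) auto
  then show False
  proof cases
    case 1
    with e' nb(2) have "(v, w) \<in> FP" by (elim join_edge_cases) auto
    with 1 P show False unfolding arc_tree_def paths_at_most_one_def by blast
  next
    case 2
    with e' nb(2) have "(v - nP, w - nP) \<in> FQ" by (elim join_edge_cases) auto
    with 2 Q show False unfolding arc_tree_def paths_at_most_one_def by blast
  qed
qed

lemma join_edge_low:
  assumes "(p, q) \<in> join nP FP nQ FQ" "(p, q) \<noteq> (0, nP + nQ - 1)" "p < nP"
  shows "(p, q) \<in> FP" "q < nP"
  using assms(1) by (elim join_edge_cases; use assms(2,3) in simp)+

lemma join_edge_high:
  assumes "(p, q) \<in> join nP FP nQ FQ" "(p, q) \<noteq> (0, nP + nQ - 1)" "\<not> p < nP"
  shows "(p - nP, q - nP) \<in> FQ" "\<not> q < nP"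
  using assms(1) by (elim join_edge_cases; use assms(2,3) in simp)+

lemma square_free_join: "square_free (join nP FP nQ FQ)"
  unfolding square_free_def
proof (intro allI impI)
  let ?J = "join nP FP nQ FQ" and ?br = "(0, nP + nQ - 1)"
  fix u b a a' assume e: "(u, a) \<in> ?J" "(u, a') \<in> ?J" "(b, a) \<in> ?J" "(b, a') \<in> ?J"
  show "u = b \<or> a = a'"
  proof (rule ccontr)
    assume ne: "\<not> (u = b \<or> a = a')"
    have side: "(p < nP) = (q < nP)" if "(p, q) \<in> ?J" "(p, q) \<noteq> ?br" for p q
      using join_edge_low(2)[OF that] join_edge_high(2)[OF that] by blast
    have "0 < nP" "\<not> nP + nQ - 1 < nP" using arc_tree_pos[OF P] arc_tree_pos[OF Q] by auto
    then have crossing: "((p < nP) \<noteq> (q < nP)) = ((p, q) = ?br)" if "(p, q) \<in> ?J" for p q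
      using side[OF that] by (cases "(p, q) = ?br") auto
    have no_bridge: "(u, a) \<noteq> ?br" "(u, a') \<noteq> ?br" "(b, a) \<noteq> ?br" "(b, a') \<noteq> ?br"
      using crossing[OF e(1)] crossing[OF e(2)] crossing[OF e(3)] crossing[OF e(4)] ne by auto
    have "(b < nP) = (u < nP)"
      using side[OF e(2) no_bridge(2)] side[OF e(4) no_bridge(4)] by simp
    show False
    proof (cases "u < nP")
      case True
      with \<open>(b < nP) = (u < nP)\<close> have "b < nP" by simp
      with True have "(u, a) \<in> FP" "(u, a') \<in> FP" "(b, a) \<in> FP" "(b, a') \<in> FP"
        using join_edge_low(1)[OF e(1) no_bridge(1)] join_edge_low(1)[OF e(2) no_bridge(2)]
          join_edge_low(1)[OF e(3) no_bridge(3)] join_edge_low(1)[OF e(4) no_bridge(4)] by simp_all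
      moreover have "square_free FP" using P unfolding arc_tree_def by blast
      ultimately show False using ne unfolding square_free_def by blast
    next
      case False
      with \<open>(b < nP) = (u < nP)\<close> have "\<not> b < nP" by simp
      with False have "(u - nP, a - nP) \<in> FQ" "(u - nP, a' - nP) \<in> FQ"
          "(b - nP, a - nP) \<in> FQ" "(b - nP, a' - nP) \<in> FQ"
        using join_edge_high(1)[OF e(1) no_bridge(1)] join_edge_high(1)[OF e(2) no_bridge(2)]
          join_edge_high(1)[OF e(3) no_bridge(3)] join_edge_high(1)[OF e(4) no_bridge(4)]
            by simp_all
      moreover have "square_free FQ" using Q unfolding arc_tree_def by blast
      ultimately have "u - nP = b - nP \<or> a - nP = a' - nP" unfolding square_free_def by blast
      moreover have "\<not> a < nP" "\<not> a' < nP"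
        using False side[OF e(1) no_bridge(1)] side[OF e(2) no_bridge(2)] by simp_all
      ultimately show False using ne False \<open>\<not> b < nP\<close> by auto
    qed
  qed
qed

lemma arc_tree_join: "arc_tree (nP + nQ) (join nP FP nQ FQ)"
  unfolding arc_tree_def
  using join_edge card_join join_connected laminar_join paths_at_most_one_join square_free_join
  by blast

lemma neighbours_join_low:
  assumes v: "v < nP"
  shows "neighbours (join nP FP nQ FQ) v = neighbours FP v \<union> (if v = 0 then {nP + nQ - 1} else {})"
  using v arc_tree_pos[OF P] arc_tree_pos[OF Q]
  unfolding neighbours_def mem_join by auto

lemma neighbours_join_high:
  assumes v: "nP \<le> v" "v < nP + nQ"
  shows "neighbours (join nP FP nQ FQ) v =
    (\<lambda>z. z + nP) ` neighbours FQ (v - nP) \<union> (if v = nP + nQ - 1 then {0} else {})"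
proof -
  have "(v, z) \<notin> FP" "(z, v) \<notin> FP" for z
    using arc_tree_edge[OF P, of v z] arc_tree_edge[OF P, of z v] v by auto
  moreover have "z \<in> (\<lambda>z. z + nP) ` neighbours FQ (v - nP) \<longleftrightarrow>
      nP \<le> z \<and> ((v - nP, z - nP) \<in> FQ \<or> (z - nP, v - nP) \<in> FQ)" for z
    unfolding neighbours_def image_iff by (auto intro: bexI[of _ "z - nP"])
  ultimately show ?thesis
    using v arc_tree_pos[OF P] arc_tree_pos[OF Q] unfolding neighbours_def mem_join by auto
qed

lemma card_neighbours_join_low:
  assumes "v < nP"
  shows "card (neighbours (join nP FP nQ FQ) v) = card (neighbours FP v) + (if v = 0 then 1 else 0)"
proof -
  have "neighbours FP v \<subseteq> {0..<nP}"
    using arc_tree_edge[OF P] unfolding neighbours_def by fastforce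
  moreover have "nP + nQ - 1 \<notin> {0..<nP}" using arc_tree_pos[OF Q] by simp
  ultimately have "finite (neighbours FP v)" "nP + nQ - 1 \<notin> neighbours FP v"
    by (auto intro: finite_subset)
  then show ?thesis unfolding neighbours_join_low[OF assms] by (cases "v = 0") simp_all
qed

lemma card_neighbours_join_high:
  assumes "nP \<le> v" "v < nP + nQ"
  shows "card (neighbours (join nP FP nQ FQ) v) =
    card (neighbours FQ (v - nP)) + (if v = nP + nQ - 1 then 1 else 0)"
proof -
  have "neighbours FQ (v - nP) \<subseteq> {0..<nQ}"
    using arc_tree_edge[OF Q] unfolding neighbours_def by fastforce
  then have "finite ((\<lambda>z. z + nP) ` neighbours FQ (v - nP))" by (auto intro: finite_subset)
  moreover have "card ((\<lambda>z. z + nP) ` neighbours FQ (v - nP)) = card (neighbours FQ (v - nP))"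
    by (rule card_image) (auto simp: inj_on_def)
  moreover have "0 \<notin> (\<lambda>z. z + nP) ` neighbours FQ (v - nP)" using arc_tree_pos[OF P] by auto
  ultimately show ?thesis unfolding neighbours_join_high[OF assms] by auto
qed

lemma depth_steps_join:
  assumes "depth_steps FP dP" "depth_steps FQ dQ"
    and "dP 0 \<le> dQ (nQ - 1) + 1" "dQ (nQ - 1) \<le> dP 0 + 1"
  shows "depth_steps (join nP FP nQ FQ) (join_depth nP dP dQ)"
  unfolding depth_steps_def
proof (intro ballI, clarify)
  fix a b assume "(a, b) \<in> join nP FP nQ FQ"
  then show "join_depth nP dP dQ a \<le> join_depth nP dP dQ b + 1 \<and>
      join_depth nP dP dQ b \<le> join_depth nP dP dQ a + 1"
    using assms arc_tree_pos[OF P] arc_tree_pos[OF Q]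
    by (elim join_edge_cases) (auto simp: join_depth_def depth_steps_def)
qed

lemma degree_profile_join_source:
  assumes dP: "degree_profile q nP FP dP 0 mP"
    and dQ: "degree_profile q nQ FQ dQ (nQ - 1) (if dQ (nQ - 1) = 0 then 0 else q)"
  shows "degree_profile q (nP + nQ) (join nP FP nQ FQ) (join_depth nP dP dQ) 0 (Suc mP)"
  unfolding degree_profile_def
proof (intro conjI allI impI)
  show "card (neighbours (join nP FP nQ FQ) 0) = Suc mP"
    using card_neighbours_join_low[of 0] arc_tree_pos[OF P] dP unfolding degree_profile_def by simp
  fix v assume v: "v < nP + nQ" "v \<noteq> 0"
  show "card (neighbours (join nP FP nQ FQ) v) = (if join_depth nP dP dQ v = 0 then 1 else Suc q)"
  proof (cases "v < nP")
    case True
    then show ?thesis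
      using card_neighbours_join_low[OF True] dP v unfolding degree_profile_def join_depth_def
        by simp
  next
    case False
    then have "v - nP < nQ" using v by simp
    then show ?thesis
      using card_neighbours_join_high[OF _ v(1)] False dQ arc_tree_pos[OF Q]
      unfolding degree_profile_def join_depth_def by (cases "v = nP + nQ - 1") auto
  qed
qed

lemma degree_profile_join_sink:
  assumes dP: "degree_profile q nP FP dP 0 (if dP 0 = 0 then 0 else q)"
    and dQ: "degree_profile q nQ FQ dQ (nQ - 1) mQ"
  shows "degree_profile q (nP + nQ) (join nP FP nQ FQ) (join_depth nP dP dQ) (nP + nQ - 1) (Suc mQ)"
  unfolding degree_profile_def
proof (intro conjI allI impI)
  have "nP + nQ - 1 - nP = nQ - 1" "nP \<le> nP + nQ - 1" "nP + nQ - 1 < nP + nQ"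
    using arc_tree_pos[OF P] arc_tree_pos[OF Q] by auto
  then show "card (neighbours (join nP FP nQ FQ) (nP + nQ - 1)) = Suc mQ"
    using card_neighbours_join_high[of "nP + nQ - 1"] dQ unfolding degree_profile_def by simp
  fix v assume v: "v < nP + nQ" "v \<noteq> nP + nQ - 1"
  show "card (neighbours (join nP FP nQ FQ) v) = (if join_depth nP dP dQ v = 0 then 1 else Suc q)"
  proof (cases "v < nP")
    case True
    then show ?thesis
      using card_neighbours_join_low[OF True] dP v
      unfolding degree_profile_def join_depth_def by (cases "v = 0") auto
  next
    case False
    then have "v - nP < nQ" "v - nP \<noteq> nQ - 1" using v by auto
    then show ?thesis
      using card_neighbours_join_high[OF _ v(1)] False v dQ
      unfolding degree_profile_def join_depth_def by simp
  qed
qed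

end


definition join_blocks ::
  "nat \<times> (nat \<times> nat) set \<times> (nat \<Rightarrow> nat) \<Rightarrow> nat \<times> (nat \<times> nat) set \<times> (nat \<Rightarrow> nat) \<Rightarrow>
   nat \<times> (nat \<times> nat) set \<times> (nat \<Rightarrow> nat)" where
  "join_blocks B C = (case B of (nP, FP, dP) \<Rightarrow> case C of (nQ, FQ, dQ) \<Rightarrow>
     (nP + nQ, join nP FP nQ FQ, join_depth nP dP dQ))"

text \<open>\<open>block q src h m\<close> is a tree whose root has depth \<open>h\<close> and \<open>m\<close> children, while every other inner
  vertex has \<open>q\<close> children; the root is the first vertex and a source if \<open>src\<close>, otherwise the
  last vertex and a sink. The depth of a vertex is its distance to the leaves.\<close>

fun block :: "nat \<Rightarrow> bool \<Rightarrow> nat \<Rightarrow> nat \<Rightarrow> nat \<times> (nat \<times> nat) set \<times> (nat \<Rightarrow> nat)" where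
  "block q src 0 m = (1, {}, \<lambda>_. 0)"
| "block q src (Suc h) 0 = (1, {}, \<lambda>_. Suc h)"
| "block q True (Suc h) (Suc m) = join_blocks (block q True (Suc h) m) (block q False h q)"
| "block q False (Suc h) (Suc m) = join_blocks (block q True h q) (block q False (Suc h) m)"

lemma block_invariant:
  "block q src h m = (n, E, depth) \<Longrightarrow>
     arc_tree n E \<and> depth_steps E depth \<and> depth (if src then 0 else n - 1) = h \<and>
     degree_profile q n E depth (if src then 0 else n - 1) (if h = 0 then 0 else m)"
proof (induction q src h m arbitrary: n E depth rule: block.induct)
  case (3 q h m)
  obtain nP FP dP where bP: "block q True (Suc h) m = (nP, FP, dP)" by (metis prod_cases3)
  obtain nQ FQ dQ where bQ: "block q False h q = (nQ, FQ, dQ)" by (metis prod_cases3)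
  have P: "arc_tree nP FP" "depth_steps FP dP" "dP 0 = Suc h" "degree_profile q nP FP dP 0 m"
    using "3.IH"(1)[OF bP] by simp_all
  have Q: "arc_tree nQ FQ" "depth_steps FQ dQ" "dQ (nQ - 1) = h"
    "degree_profile q nQ FQ dQ (nQ - 1) (if dQ (nQ - 1) = 0 then 0 else q)"
    using "3.IH"(2)[OF bQ] by simp_all
  have e: "n = nP + nQ" "E = join nP FP nQ FQ" "depth = join_depth nP dP dQ"
    using "3.prems" bP bQ by (auto simp: join_blocks_def)
  have "join_depth nP dP dQ 0 = Suc h" using P(3) arc_tree_pos[OF P(1)]
    by (simp add: join_depth_def)
  with arc_tree_join[OF P(1) Q(1)] depth_steps_join[OF P(1) Q(1) P(2) Q(2)]
    degree_profile_join_source[OF P(1) Q(1) P(4) Q(4)] P(3) Q(3)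
  show ?case unfolding e by simp
next
  case (4 q h m)
  obtain nP FP dP where bP: "block q True h q = (nP, FP, dP)" by (metis prod_cases3)
  obtain nQ FQ dQ where bQ: "block q False (Suc h) m = (nQ, FQ, dQ)" by (metis prod_cases3)
  have P: "arc_tree nP FP" "depth_steps FP dP" "dP 0 = h"
    "degree_profile q nP FP dP 0 (if dP 0 = 0 then 0 else q)"
    using "4.IH"(1)[OF bP] by simp_all
  have Q: "arc_tree nQ FQ" "depth_steps FQ dQ" "dQ (nQ - 1) = Suc h"
    "degree_profile q nQ FQ dQ (nQ - 1) m"
    using "4.IH"(2)[OF bQ] by simp_all
  have e: "n = nP + nQ" "E = join nP FP nQ FQ" "depth = join_depth nP dP dQ"
    using "4.prems" bP bQ by (auto simp: join_blocks_def)
  have "join_depth nP dP dQ (nP + nQ - 1) = Suc h"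
    using Q(3) arc_tree_pos[OF Q(1)] by (auto simp: join_depth_def)
  with arc_tree_join[OF P(1) Q(1)] depth_steps_join[OF P(1) Q(1) P(2) Q(2)]
    degree_profile_join_sink[OF P(1) Q(1) P(4) Q(4)] P(3) Q(3)
  show ?case unfolding e by simp
qed (use arc_tree_single in \<open>auto simp: depth_steps_def degree_profile_def neighbours_def\<close>)

lemma exists_regular_arc_tree:
  assumes "1 \<le> h" "1 \<le> d"
  obtains n E depth where "arc_tree n E" "depth_steps E depth" "depth 0 = h"
    "\<And>v. v < n \<Longrightarrow> card (neighbours E v) = (if v = 0 \<or> depth v \<noteq> 0 then d else 1)"
proof -
  obtain n E depth where "block (d - 1) True h d = (n, E, depth)" by (metis prod_cases3)
  from block_invariant[OF this] assms show thesis
    by (intro that[of n E depth]) (auto simp: degree_profile_def)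
qed

section \<open>The span of regular arc trees\<close>

lemma arc_tree_directed_tree:
  assumes T: "arc_tree n E"
  shows "directed_tree {0..<n} E"
  unfolding directed_tree_def
proof (intro conjI)
  have up: "\<And>a b. (a, b) \<in> E \<Longrightarrow> a < b \<and> b < n" by (rule arc_tree_edge[OF T])
  show "finite {0..<n}" by simp
  show "{0..<n} \<noteq> {}" using arc_tree_pos[OF T] by simp
  show "E \<subseteq> {0..<n} \<times> {0..<n}" using up by fastforce
  have "E \<subseteq> less_than" using up by auto
  then show "acyclic E" by (rule wf_acyclic[OF wf_subset[OF wf_less_than]])
  show "\<forall>u v. (u, v) \<in> E \<longrightarrow> (v, u) \<notin> E" using up by (meson order.asym)
  have "(u, 0) \<in> (E \<union> E\<inverse>)\<^sup>*" if "u < n" for u using T that unfolding arc_tree_def by blast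
  then show "\<forall>u\<in>{0..<n}. \<forall>v\<in>{0..<n}. (u, v) \<in> (E \<union> E\<inverse>)\<^sup>*"
    by (meson atLeastLessThan_iff rtrancl_trans symD[OF sym_rtrancl[OF sym_Un_converse]])
  have "inj_on (\<lambda>(u, v). {u, v}) E"
  proof (rule inj_onI, clarify)
    fix a b a' b' assume "(a, b) \<in> E" "(a', b') \<in> E" "{a, b} = {a', b'}"
    with up[of a b] up[of a' b'] show "a = a' \<and> b = b'" by (auto simp: doubleton_eq_iff)
  qed
  moreover have "{{u, v} | u v. (u, v) \<in> E} = (\<lambda>(u, v). {u, v}) ` E" by auto
  ultimately show "card {0..<n} = card {{u, v} | u v. (u, v) \<in> E} + 1"
    using T card_image unfolding arc_tree_def by fastforce
qed

lemma vdegree_eq_card_neighbours: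
  fixes E :: "('a \<times> 'a) set"
  assumes asym: "\<forall>(a, b)\<in>E. (b, a) \<notin> E"
  shows "vdegree E v = card (neighbours E v)"
proof -
  let ?other = "\<lambda>e. if fst e = v then snd e else fst e"
  have "bij_betw ?other {e \<in> E. fst e = v \<or> snd e = v} (neighbours E v)"
    unfolding bij_betw_def inj_on_def neighbours_def using asym by (force simp: image_iff)
  then show ?thesis unfolding vdegree_def by (rule bij_betw_same_card)
qed

text \<open>The vertices are placed on a vertical line and the edge \<open>(a, b)\<close> is drawn as the curve whose
  x-coordinate at height \<open>t\<close> is \<open>(t - a) (b - t)\<close>; of two non-interleaving intervals sharing an
  interior point one contains the other, and then its curve lies strictly further right.\<close>

definition edge_arc :: "nat \<times> nat \<Rightarrow> real \<Rightarrow> real \<times> real" where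
  "edge_arc e s = (s * (1 - s) * (real (snd e) - real (fst e))^2,
     real (fst e) + s * (real (snd e) - real (fst e)))"

lemma fst_edge_arc:
  "fst (edge_arc (a, b) s) = (snd (edge_arc (a, b) s) - a) * (b - snd (edge_arc (a, b) s))"
  unfolding edge_arc_def by (simp add: power2_eq_square algebra_simps)

lemma fst_edge_arc_eq_0:
  assumes "a < b" "s \<in> {0..1}" "fst (edge_arc (a, b) s) = 0"
  shows "snd (edge_arc (a, b) s) = a \<or> snd (edge_arc (a, b) s) = b"
  using assms unfolding edge_arc_def by auto

lemma fst_edge_arc_neq_0:
  assumes "a < b" "s \<in> {0..1}" "fst (edge_arc (a, b) s) \<noteq> 0"
  shows "a < snd (edge_arc (a, b) s) \<and> snd (edge_arc (a, b) s) < b"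
proof -
  have "0 < s" "s < 1" using assms unfolding edge_arc_def by (auto simp: less_le)
  moreover have "0 < real b - real a" using assms(1) by simp
  ultimately have "0 < s * (real b - real a)" "s * (real b - real a) < 1 * (real b - real a)"
    by (intro mult_pos_pos mult_strict_right_mono; simp)+
  then show ?thesis unfolding edge_arc_def by simp
qed

lemma nested_product_less:
  fixes a b a' b' t :: real
  assumes "a \<le> a'" "b' \<le> b" "a < a' \<or> b' < b" "a' < t" "t < b'"
  shows "(t - a') * (b' - t) < (t - a) * (b - t)"
  using assms
    by (smt (verit) mult_strict_left_mono mult_strict_right_mono mult_left_mono mult_right_mono)

lemma arcs_meet_at_common_end:
  assumes ab: "a < b" "a' < b'" and ne: "(a, b) \<noteq> (a', b')"
    and lam: "\<not> (a < a' \<and> a' < b \<and> b < b')" "\<not> (a' < a \<and> a < b' \<and> b' < b)"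
    and P: "P \<in> edge_arc (a, b) ` {0..1}" "P \<in> edge_arc (a', b') ` {0..1}"
  shows "P \<in> (\<lambda>v. (0, real v)) ` ({a, b} \<inter> {a', b'})"
proof -
  obtain s s' where s: "s \<in> {0..1}" "P = edge_arc (a, b) s"
    and s': "s' \<in> {0..1}" "P = edge_arc (a', b') s'"
    using P by blast
  define t where "t = snd P"
  have x: "fst P = (t - a) * (b - t)" "fst P = (t - a') * (b' - t)"
    using fst_edge_arc[of a b s] fst_edge_arc[of a' b' s'] s(2) s'(2) unfolding t_def by simp_all
  show ?thesis
  proof (cases "fst P = 0")
    case True
    with fst_edge_arc_eq_0[OF ab(1) s(1)] fst_edge_arc_eq_0[OF ab(2) s'(1)] s s'
    obtain w where "w \<in> {a, b} \<inter> {a', b'}" "t = real w" unfolding t_def by auto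
    with True show ?thesis unfolding t_def by (metis image_eqI prod.collapse)
  next
    case False
    with fst_edge_arc_neq_0[OF ab(1) s(1)] fst_edge_arc_neq_0[OF ab(2) s'(1)] s s'
    have "a < t" "t < b" "a' < t" "t < b'" unfolding t_def by auto
    then have "(t - a') * (b' - t) < (t - a) * (b - t) \<or> (t - a) * (b - t) < (t - a') * (b' - t)"
      using nested_product_less[of a a' b' b t] nested_product_less[of a' a b b' t] lam ne
      by (smt (verit) of_nat_less_iff of_nat_eq_iff prod.inject)
    then show ?thesis using x by simp
  qed
qed

lemma laminar_upward_layered_drawing:
  assumes up: "\<forall>(a, b)\<in>E. a < b" and L: "laminar E"
  shows "upward_layered_drawing {0..<n} E (\<lambda>_. 0) int edge_arc"
  unfolding upward_layered_drawing_def
proof (intro conjI ballI impI)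
  show "inj_on (\<lambda>v. (0, real_of_int (int v))) {0..<n}" by (auto simp: inj_on_def)
next
  fix e assume "e \<in> E"
  moreover obtain a b where e: "e = (a, b)" by fastforce
  ultimately have "a < b" using up by auto
  then show "case e of (u, v) \<Rightarrow> continuous_on {0..1} (edge_arc (u, v)) \<and>
      edge_arc (u, v) 0 = (0, real_of_int (int u)) \<and>
      edge_arc (u, v) 1 = (0, real_of_int (int v)) \<and>
      strict_mono_on {0..1} (\<lambda>t. snd (edge_arc (u, v) t))"
    unfolding e edge_arc_def monotone_on_def
      by (auto intro!: continuous_intros mult_strict_right_mono)
next
  fix e1 e2 assume e: "e1 \<in> E" "e2 \<in> E" "e1 \<noteq> e2"
  obtain a b a' b' where ab: "e1 = (a, b)" "e2 = (a', b')" by fastforce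
  have "a < b" "a' < b'" using up e ab by auto
  moreover have "\<not> (a < a' \<and> a' < b \<and> b < b')" "\<not> (a' < a \<and> a < b' \<and> b' < b)"
    using L e ab unfolding laminar_def by blast+
  ultimately show "edge_arc e1 ` {0..1} \<inter> edge_arc e2 ` {0..1} \<subseteq>
      (\<lambda>v. (0, real_of_int (int v))) ` ({fst e1, snd e1} \<inter> {fst e2, snd e2})"
    using arcs_meet_at_common_end[of a b a' b'] e(3) unfolding ab by auto
next
  fix e w assume "e \<in> E" "w \<in> {0..<n}" "(0, real_of_int (int w)) \<in> edge_arc e ` {0..1}"
  moreover obtain a b where e: "e = (a, b)" by fastforce
  ultimately obtain s where "s \<in> {0..1}" "(0, real w) = edge_arc (a, b) s" "a < b" using up by auto
  with fst_edge_arc_eq_0[of a b s] show "w = fst e \<or> w = snd e"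
    unfolding e by (metis fst_conv snd_conv of_nat_eq_iff)
qed

lemma dag_span_greater:
  assumes fin: "finite E" and D: "upward_layered_drawing V E x y c"
    and low: "\<And>x y c. upward_layered_drawing V E x y c \<Longrightarrow> \<forall>(u, v)\<in>E. y v - y u \<le> int k \<Longrightarrow> False"
  shows "k < dag_span V E"
proof -
  let ?bounded = "\<lambda>s. \<exists>x y c. upward_layered_drawing V E x y c \<and> (\<forall>(u, v)\<in>E. y v - y u \<le> int s)"
  obtain s where "\<forall>m\<in>(\<lambda>(u, v). nat (y v - y u)) ` E. m \<le> s"
    using finite_nat_set_iff_bounded_le fin by blast
  then have "\<forall>(u, v)\<in>E. y v - y u \<le> int s" by fastforce
  with D have "?bounded s" by blast
  then have "?bounded (dag_span V E)" unfolding dag_span_def by (rule LeastI)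
  then obtain x' y' c' where "upward_layered_drawing V E x' y' c'"
    and "\<forall>(u, v)\<in>E. y' v - y' u \<le> int (dag_span V E)" by blast
  with low[of x' y' c'] show ?thesis by fastforce
qed

lemma vdegree_arc_tree:
  assumes "arc_tree n E"
  shows "vdegree E v = card (neighbours E v)"
proof (rule vdegree_eq_card_neighbours, clarify)
  fix a b assume "(a, b) \<in> E" "(b, a) \<in> E"
  with arc_tree_edge[OF assms] show False by (meson order.asym)
qed

lemma regular_arc_tree_span_greater:
  assumes T: "arc_tree n E" and D: "depth_steps E depth" and d: "2 < d"
    and root: "depth 0 = d div 2 + 5"
    and deg: "\<And>v. v < n \<Longrightarrow> card (neighbours E v) = (if v = 0 \<or> depth v \<noteq> 0 then d else 1)"
  shows "d div 2 < dag_span {0..<n} E"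
proof (rule dag_span_greater[OF arc_tree_finite[OF T] laminar_upward_layered_drawing])
  have "v < n" if "v \<in> Field E" for v
    using that arc_tree_edge[OF T] unfolding Field_def by (fastforce dest: order.strict_trans)
  then have S: "thick E depth d"
    using T D deg d arc_tree_finite[OF T] unfolding thick_def arc_tree_def by auto
  have "neighbours E 0 \<noteq> {}" using deg[of 0] arc_tree_pos[OF T] d by auto
  then obtain q0 where q0: "(0, q0) \<in> E" using arc_tree_edge[OF T] unfolding neighbours_def by blast
  fix x y c assume "upward_layered_drawing {0..<n} E x y c"
    and span: "\<forall>(u, v)\<in>E. y v - y u \<le> int (d div 2)"
  then obtain X where "graph_drawing E x y X" using upward_layered_drawing_graph_drawing by blast
  moreover have "square_free E" using T unfolding arc_tree_def by blast
  ultimately show False using span_lower_bound[OF _ S _ q0 d span] root by simp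
qed (use T in \<open>auto simp: arc_tree_def\<close>)

theorem mainTheorem5:
  fixes d :: nat
  assumes "d > 2"
  shows "\<exists>(V :: nat set) E. directed_tree V E \<and> (\<forall>v\<in>V. vdegree E v \<le> d) \<and>
           paths_at_most_one E \<and> upward_planar V E \<and> dag_span V E \<ge> d div 2 + 1"
proof -
  obtain n E depth where T: "arc_tree n E" and D: "depth_steps E depth"
    and root: "depth 0 = d div 2 + 5"
    and deg: "\<And>v. v < n \<Longrightarrow> card (neighbours E v) = (if v = 0 \<or> depth v \<noteq> 0 then d else 1)"
    using exists_regular_arc_tree[of "d div 2 + 5" d] assms by auto
  have "\<forall>(a, b)\<in>E. a < b" "laminar E" "paths_at_most_one E"
    using T unfolding arc_tree_def by auto
  then have "upward_planar {0..<n} E" "paths_at_most_one E"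
    using laminar_upward_layered_drawing unfolding upward_planar_def by blast+
  moreover have "\<forall>v\<in>{0..<n}. vdegree E v \<le> d"
    using vdegree_arc_tree[OF T] deg assms by simp
  moreover have "d div 2 < dag_span {0..<n} E"
    by (rule regular_arc_tree_span_greater[OF T D assms root deg])
  ultimately show ?thesis using arc_tree_directed_tree[OF T] by (intro exI) auto
qed

end
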